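(* There exist binary-input discrete memoryless channels $W$ and $V$ with a common finite output alphabet $\mathcal{Y}$, both symmetrized by the same involutive permutation of $\mathcal{Y}$, such that $$C(W^+,V^+)+C(W^-,V^-) > 2\,C(W,V).$$
   Context: A binary-input discrete memoryless channel (B-DMC) $W:\{0,1\}\to\mathcal{Y}$ is given by transition probabilities $W(y|x)$. Two B-DMCs $W,V$ with the same output alphabet are symmetrized by the same permutation if there is a permutation $\pi$ of $\mathcal{Y}$ with $\pi=\pi^{-1}$ such that $W(y|0)=W(\pi(y)|1)$ and $V(y|0)=V(\pi(y)|1)$ for all $y$. Mismatched capacity: for B-DMCs $W,V$ with the same output alphabet, $C(W,V)$ is the supremum of rates $R$ such that for every $\epsilon>0$ and all sufficiently large $n$ there is a codebook $\{\mathbf{x}(1),\dots,\mathbf{x}(M)\}\subset\{0,1\}^n$ with $\frac{\log M}{n}>R$ whose maximal error probability over the memoryless channel $W$ is less than $\epsilon$ when decoded with the mismatched decoder for $V$: on receiving $\mathbf{y}$ it outputs the unique $i$ with $\prod_k V(y_k|x_k(i)) > \prod_k V(y_k|x_k(j))$ for all $j\ne i$ (i.e. $d(\mathbf x(i),\mathbf y)<d(\mathbf x(j),\mathbf y)$ for the additive metric $d(x,y)=-\log V(y|x)$), and declares an erasure (error) if no such $i$ exists. Polar transforms: from a B-DMC $W:\{0,1\}\to\mathcal{Y}$ one defines $W^-:\{0,1\}\to\mathcal{Y}^2$ and $W^+:\{0,1\}\to\mathcal{Y}^2\times\mathbb{F}_2$ by $W^-(y_1y_2|u_1)=\sum_{u_2\in\mathbb{F}_2}\tfrac12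 W(y_1|u_1\oplus u_2)W(y_2|u_2)$ and $W^+(y_1y_2u_1|u_2)=\tfrac12 W(y_1|u_1\oplus u_2)W(y_2|u_2)$; $V^\pm$ are defined in the same way from $V$. *)

theory Defs
  imports Complex_Main
begin

type_synonym 'y bchannel = "bool \<Rightarrow> 'y \<Rightarrow> real"
  \<comment> \<open>W x y = W(y|x); input 0 = False, 1 = True\<close>

definition bdmc :: "'y set \<Rightarrow> 'y bchannel \<Rightarrow> bool" where
  "bdmc Y W \<longleftrightarrow> finite Y \<and> (\<forall>x y. 0 \<le> W x y) \<and> (\<forall>x. (\<Sum>y\<in>Y. W x y) = 1)
     \<and> (\<forall>x y. y \<notin> Y \<longrightarrow> W x y = 0)"

definition sym_by :: "'y set \<Rightarrow> ('y \<Rightarrow> 'y) \<Rightarrow> 'y bchannel \<Rightarrow> bool" where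
  "sym_by Y \<pi> W \<longleftrightarrow> (\<forall>y\<in>Y. \<pi> y \<in> Y \<and> \<pi> (\<pi> y) = y \<and> W False y = W True (\<pi> y))"

definition chprod :: "'y bchannel \<Rightarrow> bool list \<Rightarrow> 'y list \<Rightarrow> real" where
  "chprod W xs ys = (\<Prod>k<length xs. W (xs ! k) (ys ! k))"

definition decodes_to :: "'y bchannel \<Rightarrow> nat \<Rightarrow> (nat \<Rightarrow> bool list) \<Rightarrow> 'y list \<Rightarrow> nat \<Rightarrow> bool" where
  "decodes_to V M cb ys i \<longleftrightarrow>
     (\<forall>j<M. j \<noteq> i \<longrightarrow> chprod V (cb i) ys > chprod V (cb j) ys)"

definition err_prob :: "'y set \<Rightarrow> 'y bchannel \<Rightarrow> 'y bchannel \<Rightarrow> nat \<Rightarrow> nat \<Rightarrow> (nat \<Rightarrow> bool list) \<Rightarrow> nat \<Rightarrow> real" where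
  "err_prob Y W V n M cb i =
     (\<Sum>ys\<in>{ys. set ys \<subseteq> Y \<and> length ys = n \<and> \<not> decodes_to V M cb ys i}. chprod W (cb i) ys)"

definition achievable :: "'y set \<Rightarrow> 'y bchannel \<Rightarrow> 'y bchannel \<Rightarrow> real \<Rightarrow> bool" where
  "achievable Y W V R \<longleftrightarrow>
     (\<forall>\<epsilon>>0. \<exists>N. \<forall>n\<ge>N. \<exists>M cb.
        (\<forall>i<M. length (cb i) = n) \<and> log 2 (real M) / real n > R \<and>
        (\<forall>i<M. err_prob Y W V n M cb i < \<epsilon>))"

definition mcap :: "'y set \<Rightarrow> 'y bchannel \<Rightarrow> 'y bchannel \<Rightarrow> real" where
  "mcap Y W V = Sup {R. achievable Y W V R}"

definition polar_minus :: "'y bchannel \<Rightarrow> ('y \<times> 'y) bchannel" where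
  "polar_minus W u1 yy = (\<Sum>u2\<in>(UNIV::bool set). 1/2 * W (u1 \<noteq> u2) (fst yy) * W u2 (snd yy))"

definition polar_plus :: "'y bchannel \<Rightarrow> (('y \<times> 'y) \<times> bool) bchannel" where
  "polar_plus W u2 yyu = (let ((y1, y2), u1) = yyu in 1/2 * W (u1 \<noteq> u2) y1 * W u2 y2)"

end

theory Submission
  imports Defs
begin

text \<open>Take for W the noiseless binary channel and for V its input-flipped version.
  The transmitted codeword always has V-likelihood zero, so the V-decoder never
  decodes it correctly once there are two codewords: C(W,V) = 0.  The minus
  transform only sees the parity of the two inputs, which is invariant under
  flipping both, so W^- = V^-; moreover W^- is again noiseless, whence
  C(W^-,V^-) = 1, while C(W^+,V^+) \<ge> 0 trivially.\<close>

definition noiseless :: "'y bchannel \<Rightarrow> bool" where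
  "noiseless W \<longleftrightarrow> (\<forall>y. W False y = 0 \<or> W True y = 0)"

lemma noiselessD: "noiseless W \<Longrightarrow> W x y \<noteq> 0 \<Longrightarrow> x' \<noteq> x \<Longrightarrow> W x' y = 0"
  unfolding noiseless_def by (cases x; cases x') auto

lemma chprod_Cons: "chprod W (x # xs) (y # ys) = W x y * chprod W xs ys"
  unfolding chprod_def by (simp only: length_Cons prod.lessThan_Suc_shift) simp

lemma chprod_nonneg: "(\<And>x y. 0 \<le> W x y) \<Longrightarrow> 0 \<le> chprod W xs ys"
  unfolding chprod_def by (simp add: prod_nonneg)

lemma chprod_eq_0_iff: "chprod W xs ys = 0 \<longleftrightarrow> (\<exists>k<length xs. W (xs ! k) (ys ! k) = 0)"
  unfolding chprod_def by auto

lemma sum_chprod_words: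
  assumes "bdmc Y W"
  shows "(\<Sum>ys | set ys \<subseteq> Y \<and> length ys = length xs. chprod W xs ys) = 1"
proof (induction xs)
  case Nil
  have "{ys. set ys \<subseteq> Y \<and> length ys = length ([]::bool list)} = {[]}" by auto
  then show ?case by (simp add: chprod_def)
next
  case (Cons x xs)
  let ?L = "{ys. set ys \<subseteq> Y \<and> length ys = length xs}"
  have words: "{ys. set ys \<subseteq> Y \<and> length ys = length (x # xs)} = (\<lambda>(ys, y). y # ys) ` (?L \<times> Y)"
    using lists_length_Suc_eq[of Y "length xs"] by simp
  have inj: "inj_on (\<lambda>(ys, y). y # ys) (?L \<times> Y)"
    by (auto simp: inj_on_def)
  have "(\<Sum>ys | set ys \<subseteq> Y \<and> length ys = length (x # xs). chprod W (x # xs) ys)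
      = (\<Sum>ys\<in>?L. \<Sum>y\<in>Y. W x y * chprod W xs ys)"
    unfolding words sum.reindex[OF inj]
    by (simp add: sum.cartesian_product chprod_Cons case_prod_beta)
  also have "\<dots> = (\<Sum>ys\<in>?L. chprod W xs ys)"
    using assms by (simp add: bdmc_def sum_distrib_right[symmetric])
  finally show ?case using Cons by simp
qed

lemma err_prob_eq_1:
  assumes "bdmc Y W" and "length (cb i) = n"
    and "\<And>ys. chprod W (cb i) ys \<noteq> 0 \<Longrightarrow> \<not> decodes_to V M cb ys i"
  shows "err_prob Y W V n M cb i = 1"
proof -
  let ?words = "{ys. set ys \<subseteq> Y \<and> length ys = n}"
  have "err_prob Y W V n M cb i = (\<Sum>ys\<in>?words. chprod W (cb i) ys)"
    unfolding err_prob_def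
    by (rule sum.mono_neutral_left) (use assms in \<open>auto simp: bdmc_def finite_lists_length_eq\<close>)
  also have "\<dots> = 1"
    using sum_chprod_words[OF assms(1), of "cb i"] assms(2) by simp
  finally show ?thesis .
qed

lemma err_prob_noiseless:
  assumes "bdmc Y W" "noiseless W" "inj_on cb {..<M}" "\<forall>j<M. length (cb j) = n" "i < M"
  shows "err_prob Y W W n M cb i = 0"
  unfolding err_prob_def
proof (rule sum.neutral, rule ballI, rule ccontr)
  fix ys assume ys: "ys \<in> {ys. set ys \<subseteq> Y \<and> length ys = n \<and> \<not> decodes_to W M cb ys i}"
    and nz: "chprod W (cb i) ys \<noteq> 0"
  from ys obtain j where j: "j < M" "j \<noteq> i" "\<not> chprod W (cb j) ys < chprod W (cb i) ys"
    unfolding decodes_to_def by blast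
  have "cb j \<noteq> cb i" using assms(3,5) j by (auto dest: inj_onD)
  then obtain k where k: "k < n" "cb j ! k \<noteq> cb i ! k"
    using nth_equalityI[of "cb j" "cb i"] assms(4,5) j(1) by metis
  have "W (cb i ! k) (ys ! k) \<noteq> 0"
    using nz k(1) assms(4,5) by (simp add: chprod_eq_0_iff)
  then have "chprod W (cb j) ys = 0"
    using noiselessD[OF assms(2) _ k(2)] k(1) assms(4) j(1) by (auto simp: chprod_eq_0_iff)
  moreover have "0 < chprod W (cb i) ys"
    using nz chprod_nonneg[of W] assms(1) by (simp add: bdmc_def order_less_le)
  ultimately show False using j(3) by simp
qed

lemma codebook_collision:
  fixes cb :: "nat \<Rightarrow> bool list"
  assumes "\<forall>i<M. length (cb i) = n" "2 ^ n < M"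
  obtains i j where "i < M" "j < M" "i \<noteq> j" "cb i = cb j"
proof -
  have "card (cb ` {..<M}) \<le> card {xs. set xs \<subseteq> (UNIV::bool set) \<and> length xs = n}"
    by (rule card_mono[OF finite_lists_length_eq]) (use assms(1) in auto)
  also have "\<dots> = 2 ^ n"
    using card_lists_length_eq[of "UNIV::bool set" n] by simp
  finally have "\<not> inj_on cb {..<M}"
    using assms(2) card_image[of cb "{..<M}"] by auto
  then show thesis
    using that unfolding inj_on_def by blast
qed

lemma achievable_codeE:
  assumes "achievable Y W V R"
  obtains n M cb where "n \<ge> 1" "\<forall>i<M. length (cb i) = n" "R * n < log 2 M"
    "\<forall>i<M. err_prob Y W V n M cb i < 1"
proof -
  obtain N where N: "\<forall>n\<ge>N. \<exists>M cb. (\<forall>i<M. length (cb i) = n) \<and> R < log 2 M / n \<and>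
      (\<forall>i<M. err_prob Y W V n M cb i < 1)"
    using assms unfolding achievable_def by (meson zero_less_one)
  then obtain M cb where "\<forall>i<M. length (cb i) = max N 1" "R < log 2 M / max N 1"
      "\<forall>i<M. err_prob Y W V (max N 1) M cb i < 1"
    by (meson max.cobounded1)
  then show thesis
    using that[of "max N 1"] by (simp add: pos_less_divide_eq)
qed

lemma achievable_neg: "R < 0 \<Longrightarrow> achievable Y W V R"
  unfolding achievable_def
proof (intro allI impI exI)
  fix \<epsilon> :: real and n :: nat
  assume "R < 0" "\<epsilon> > 0"
  moreover have "err_prob Y W V n 1 (\<lambda>_. replicate n False) 0 = 0"
    unfolding err_prob_def decodes_to_def by simp
  ultimately show "(\<forall>i<1. length (replicate n False) = n) \<and> R < log 2 (real 1) / n \<and>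
      (\<forall>i<1. err_prob Y W V n 1 (\<lambda>_. replicate n False) i < \<epsilon>)"
    by simp
qed

text \<open>Beyond rate one two codewords coincide, and then neither of them is ever decoded.\<close>

lemma achievable_less_1:
  assumes "bdmc Y W" "achievable Y W V R"
  shows "R < 1"
proof (rule ccontr)
  assume "\<not> R < 1"
  obtain n M cb where n: "n \<ge> 1" and len: "\<forall>i<M. length (cb i) = n"
    and rate: "R * n < log 2 M" and err: "\<forall>i<M. err_prob Y W V n M cb i < 1"
    using assms(2) by (rule achievable_codeE)
  have "n < log 2 M"
    using rate mult_right_mono[of 1 R "real n"] \<open>\<not> R < 1\<close> by simp
  then have "M > 0"
    using n by (cases "M = 0") (auto simp: log_def)
  then have "2 ^ n < M"
    using \<open>n < log 2 M\<close> by (simp add: less_log_iff powr_realpow)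
  with len obtain i j where ij: "i < M" "j < M" "i \<noteq> j" "cb i = cb j"
    by (rule codebook_collision)
  then have "err_prob Y W V n M cb i = 1"
    using assms(1) len by (intro err_prob_eq_1) (auto simp: decodes_to_def)
  then show False
    using err ij(1) by fastforce
qed

lemma achievable_neg_if_supports_disjoint:
  assumes "bdmc Y W" "bdmc Y V" and disj: "\<And>x y. W x y = 0 \<or> V x y = 0"
    and "achievable Y W V R"
  shows "R < 0"
proof (rule ccontr)
  assume "\<not> R < 0"
  obtain n M cb where n: "n \<ge> 1" and len: "\<forall>i<M. length (cb i) = n"
    and rate: "R * n < log 2 M" and err: "\<forall>i<M. err_prob Y W V n M cb i < 1"
    using assms(4) by (rule achievable_codeE)
  have "0 \<le> R * n"
    using \<open>\<not> R < 0\<close> by simp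
  with rate have "0 < log 2 M"
    by linarith
  then have "M \<noteq> 0"
    by (cases "M = 0") (auto simp: log_def)
  with \<open>0 < log 2 M\<close> have "M > 1"
    using less_log_iff[of 2 M 0] by simp
  have "\<not> decodes_to V M cb ys 0" if "chprod W (cb 0) ys \<noteq> 0" for ys
  proof -
    have "W (cb 0 ! 0) (ys ! 0) \<noteq> 0"
      using that n len \<open>M > 1\<close> by (simp add: chprod_eq_0_iff)
    then have "chprod V (cb 0) ys = 0"
      using disj n len \<open>M > 1\<close> unfolding chprod_eq_0_iff by (intro exI[of _ 0]) auto
    moreover have "0 \<le> chprod V (cb 1) ys"
      using assms(2) by (intro chprod_nonneg) (simp add: bdmc_def)
    ultimately show ?thesis
      using \<open>M > 1\<close> unfolding decodes_to_def by fastforce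
  qed
  then have "err_prob Y W V n M cb 0 = 1"
    using assms(1) len \<open>M > 1\<close> by (intro err_prob_eq_1) auto
  then show False
    using err \<open>M > 1\<close> by fastforce
qed

lemma achievableI_error_free:
  assumes "\<And>n. n \<ge> 1 \<Longrightarrow> \<exists>M cb. (\<forall>i<M. length (cb i) = n) \<and> R < log 2 M / n \<and>
      (\<forall>i<M. err_prob Y W V n M cb i = 0)"
  shows "achievable Y W V R"
  unfolding achievable_def
proof (intro allI impI)
  fix \<epsilon> :: real
  assume "\<epsilon> > 0"
  show "\<exists>N. \<forall>n\<ge>N. \<exists>M cb. (\<forall>i<M. length (cb i) = n) \<and> R < log 2 M / n \<and>
      (\<forall>i<M. err_prob Y W V n M cb i < \<epsilon>)"
  proof (rule exI[of _ 1], intro allI impI)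
    fix n :: nat
    assume "n \<ge> 1"
    then obtain M cb where "\<forall>i<M. length (cb i) = n" "R < log 2 M / n"
        "\<forall>i<M. err_prob Y W V n M cb i = 0"
      using assms by blast
    with \<open>\<epsilon> > 0\<close> show "\<exists>M cb. (\<forall>i<M. length (cb i) = n) \<and> R < log 2 M / n \<and>
        (\<forall>i<M. err_prob Y W V n M cb i < \<epsilon>)"
      by (intro exI[of _ M] exI[of _ cb]) simp
  qed
qed

text \<open>Use every binary word of length n as a codeword.\<close>

lemma achievable_noiseless:
  assumes "bdmc Y W" "noiseless W" "R < 1"
  shows "achievable Y W W R"
proof (rule achievableI_error_free)
  fix n :: nat
  assume "n \<ge> 1"
  let ?words = "{xs. set xs \<subseteq> (UNIV::bool set) \<and> length xs = n}"
  have "finite ?words"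
    by (rule finite_lists_length_eq) simp
  then obtain cb where "bij_betw cb {0..<card ?words} ?words"
    using ex_bij_betw_nat_finite by blast
  moreover have "card ?words = 2 ^ n"
    using card_lists_length_eq[of "UNIV::bool set" n] by simp
  ultimately have "bij_betw cb {..<2 ^ n} ?words"
    by (simp only: atLeast0LessThan)
  then have len: "\<forall>i<2 ^ n. length (cb i) = n" and inj: "inj_on cb {..<2 ^ n}"
    by (auto simp: bij_betw_def)
  have "R < log 2 (2 ^ n) / n"
    using \<open>R < 1\<close> \<open>n \<ge> 1\<close> by (simp add: log_nat_power)
  with len show "\<exists>M cb. (\<forall>i<M. length (cb i) = n) \<and> R < log 2 M / n \<and>
      (\<forall>i<M. err_prob Y W W n M cb i = 0)"
    using err_prob_noiseless[OF assms(1,2) inj len]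
    by (intro exI[of _ "2 ^ n"] exI[of _ cb]) simp
qed

lemma bdd_above_achievable: "bdmc Y W \<Longrightarrow> bdd_above {R. achievable Y W V R}"
  unfolding bdd_above_def using achievable_less_1 by (fastforce intro: less_imp_le)

lemma mcap_nonneg:
  assumes "bdmc Y W"
  shows "0 \<le> mcap Y W V"
proof -
  have "Sup {..<0::real} \<le> Sup {R. achievable Y W V R}"
    using assms by (intro cSup_subset_mono) (auto simp: achievable_neg bdd_above_achievable)
  then show ?thesis
    by (simp add: mcap_def)
qed

lemma mcap_eq_0_if_supports_disjoint:
  assumes "bdmc Y W" "bdmc Y V" "\<And>x y. W x y = 0 \<or> V x y = 0"
  shows "mcap Y W V = 0"
proof -
  have "{R. achievable Y W V R} = {..<0}"
    using achievable_neg_if_supports_disjoint[OF assms] achievable_neg by blast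
  then show ?thesis
    by (simp add: mcap_def)
qed

lemma mcap_noiseless:
  assumes "bdmc Y W" "noiseless W"
  shows "mcap Y W W = 1"
proof -
  have "{R. achievable Y W W R} = {..<1}"
    using achievable_less_1[OF assms(1)] achievable_noiseless[OF assms] by blast
  then show ?thesis
    by (simp add: mcap_def)
qed

lemma polar_minus_input_flip: "polar_minus (\<lambda>x. W (\<not> x)) = polar_minus W"
  by (auto simp: fun_eq_iff polar_minus_def UNIV_bool)

lemma noiseless_polar_minus:
  assumes "noiseless W"
  shows "noiseless (polar_minus W)"
  unfolding noiseless_def
proof
  fix y :: "'a \<times> 'a"
  show "polar_minus W False y = 0 \<or> polar_minus W True y = 0"
    using assms[unfolded noiseless_def, rule_format, of "fst y"]
      assms[unfolded noiseless_def, rule_format, of "snd y"]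
    by (auto simp: polar_minus_def UNIV_bool)
qed

lemma sum_product_channel:
  assumes "bdmc Y W"
  shows "(\<Sum>yy\<in>Y \<times> Y. W a (fst yy) * W b (snd yy)) = 1"
  using assms sum_product[of "W a" Y "W b" Y]
  by (simp add: bdmc_def sum.cartesian_product case_prod_beta)

lemma bdmc_polar_minus:
  assumes "bdmc Y W"
  shows "bdmc (Y \<times> Y) (polar_minus W)"
proof -
  have "(\<Sum>yy\<in>Y \<times> Y. polar_minus W u yy) = 1" for u
    using sum_product_channel[OF assms]
    by (simp add: polar_minus_def UNIV_bool sum.distrib sum_divide_distrib[symmetric])
  then show ?thesis
    using assms by (auto simp: bdmc_def polar_minus_def intro!: sum_nonneg)
qed

lemma bdmc_polar_plus:
  assumes "bdmc Y W"
  shows "bdmc ((Y \<times> Y) \<times> UNIV) (polar_plus W)"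
proof -
  have "(\<Sum>yyu\<in>(Y \<times> Y) \<times> UNIV. polar_plus W u yyu) = 1" for u
    using sum_product_channel[OF assms]
    by (simp add: polar_plus_def UNIV_bool sum.cartesian_product' sum.distrib
        sum_divide_distrib[symmetric] case_prod_beta)
  then show ?thesis
    using assms by (auto simp: bdmc_def polar_plus_def)
qed

definition bsc :: "real \<Rightarrow> nat bchannel" where
  "bsc p x y = (if y = of_bool x then 1 - p else if y = of_bool (\<not> x) then p else 0)"

lemma bdmc_bsc: "0 \<le> p \<Longrightarrow> p \<le> 1 \<Longrightarrow> bdmc {0, 1} (bsc p)"
  by (auto simp: bdmc_def bsc_def)

lemma sym_by_bsc: "sym_by {0, 1} (\<lambda>y. 1 - y) (bsc p)"
  by (auto simp: sym_by_def bsc_def)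

lemma bsc_one_minus: "bsc (1 - p) = (\<lambda>x. bsc p (\<not> x))"
  by (auto simp: fun_eq_iff bsc_def)

lemma noiseless_bsc_0: "noiseless (bsc 0)"
  by (auto simp: noiseless_def bsc_def)

theorem mainTheorem1:
  shows "\<exists>(Y::nat set) W V \<pi>. bdmc Y W \<and> bdmc Y V \<and> sym_by Y \<pi> W \<and> sym_by Y \<pi> V \<and>
    mcap ((Y \<times> Y) \<times> UNIV) (polar_plus W) (polar_plus V) + mcap (Y \<times> Y) (polar_minus W) (polar_minus V)
      > 2 * mcap Y W V"
proof -
  let ?Y = "{0, 1} :: nat set"
  have W: "bdmc ?Y (bsc 0)" and V: "bdmc ?Y (bsc 1)"
    by (rule bdmc_bsc; simp)+
  have "polar_minus (bsc 1) = polar_minus (bsc 0)"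
    using polar_minus_input_flip[of "bsc 0"] bsc_one_minus[of 0] by simp
  then have "mcap (?Y \<times> ?Y) (polar_minus (bsc 0)) (polar_minus (bsc 1)) = 1"
    using mcap_noiseless[OF bdmc_polar_minus[OF W] noiseless_polar_minus[OF noiseless_bsc_0]]
    by simp
  moreover have "0 \<le> mcap ((?Y \<times> ?Y) \<times> UNIV) (polar_plus (bsc 0)) (polar_plus (bsc 1))"
    by (rule mcap_nonneg[OF bdmc_polar_plus[OF W]])
  moreover have "mcap ?Y (bsc 0) (bsc 1) = 0"
    by (rule mcap_eq_0_if_supports_disjoint[OF W V]) (simp add: bsc_def)
  ultimately show ?thesis
    using W V sym_by_bsc
    by (intro exI[of _ ?Y] exI[of _ "bsc 0"] exI[of _ "bsc 1"] exI[of _ "\<lambda>y. 1 - y"]) simp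
qed

end
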